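(* Assume $\theta_i<1$ for all $i$ and $\theta_j>0$ for some $j$. Suppose $\mathcal G(C)$ is a star topology with center node $l$ and $\theta_l=0$. Then the equilibrium social power $x^*$ of systems (A) and (B) is unique and satisfies: (i) $x^*\in\operatorname{int}\Delta_n$; (ii) $x^*_i=1/n$ for every $i\in\mathcal V_f\setminus\{l\}$; (iii) for every $i\in\mathcal V_p$, $x^*_i=\dfrac{n-\sqrt{n^2-4n\theta_i(1-\theta_i)}}{2n\theta_i}<\dfrac1n$, and this expression is strictly decreasing in $\theta_i\in(0,1)$; (iv) $x^*_l=\dfrac1n+\dfrac1n\sum_{j\in\mathcal V_p}\dfrac{\theta_j(1-x^*_j)}{1-\theta_jx^*_j}>\dfrac1n$.
   Context: Let $n\ge 2$, $\mathbf 1_n$ the all-ones vector, $I_n$ the identity matrix, $\Delta_n=\{x\in\mathbb R^n: x\ge 0,\ \mathbf 1_n^Tx=1\}$, $\operatorname{int}\Delta_n=\{x\in\mathbb R^n: x>0,\ \mathbf 1_n^Tx=1\}$. Let $C\in\mathbb R^{n\times n}$ be a nonnegative row-stochastic matrix with zero diagonal, and $\mathcal G(C)$ the digraph on $\{1,\dots,n\}$ with an edge $(i,j)$ iff $C_{ij}>0$. $\mathcal G(C)$ is a star topology with center node $l$ if every edge of $\mathcal G(C)$ is either from $l$ or to $l$ (i.e. $C_{ij}>0$ implies $i=l$ or $j=l$). Let $\theta=(\theta_1,\dots,\theta_n)\in[0,1]^n$, $\Theta=\mathrm{diag}(\theta)$, $W(x)=\mathrm{diag}(x)+(I_n-\mathrm{diag}(x))C$.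 Let $\mathcal V_f=\{i:\theta_i=0\}$ and $\mathcal V_p=\{i:\theta_i>0\}$. System (A): $x(s+1)=F(x(s))$, $x(0)\in\Delta_n$, where $F(x)=(I_n-\Theta)(I_n-W(x)^T\Theta)^{-1}\mathbf 1_n/n$; an equilibrium is $x^*\in\Delta_n$ with $F(x^* )=x^*$. System (B): $V(k+1)=\Theta W(x(k))V(k)+I_n-\Theta$, $x(k+1)=V(k+1)^T\mathbf 1_n/n$, with $V(0)=I_n$, $x(0)\in\Delta_n$; an equilibrium is a pair $(V^*,x^* )$ with $V^*$ row-stochastic, $x^*\in\Delta_n$, $V^*=\Theta W(x^* )V^*+I_n-\Theta$, $x^*=(V^* )^T\mathbf 1_n/n$. The equilibrium social powers of (A) and (B) coincide (the fixed points of $F$). *)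

theory Defs
  imports "HOL-Analysis.Analysis"
begin

text \<open>Vectors in R^n and n x n matrices are indexed by a finite type 'n, with n = CARD('n).\<close>

definition diagm :: "real ^ 'n \<Rightarrow> real ^ 'n ^ 'n" where
  "diagm v = (\<chi> i j. if i = j then v $ i else 0)"

definition ones_over_n :: "real ^ 'n::finite" where
  "ones_over_n = (\<chi> i. 1 / real CARD('n))"

definition std_simplex :: "(real ^ 'n::finite) set" where
  "std_simplex = {x. (\<forall>i. 0 \<le> x $ i) \<and> (\<Sum>i\<in>UNIV. x $ i) = 1}"

definition int_std_simplex :: "(real ^ 'n::finite) set" where
  "int_std_simplex = {x. (\<forall>i. 0 < x $ i) \<and> (\<Sum>i\<in>UNIV. x $ i) = 1}"

definition row_stochastic :: "real ^ 'n ^ 'n::finite \<Rightarrow> bool" where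
  "row_stochastic A \<longleftrightarrow> (\<forall>i j. 0 \<le> A $ i $ j) \<and> (\<forall>i. (\<Sum>j\<in>UNIV. A $ i $ j) = 1)"

definition star_topology :: "real ^ 'n ^ 'n \<Rightarrow> 'n \<Rightarrow> bool" where
  "star_topology C l \<longleftrightarrow> (\<forall>i j. C $ i $ j > 0 \<longrightarrow> i = l \<or> j = l)"

definition Wmat :: "real ^ 'n ^ 'n \<Rightarrow> real ^ 'n \<Rightarrow> real ^ 'n ^ 'n::finite" where
  "Wmat C x = diagm x + (mat 1 - diagm x) ** C"

definition Fmap :: "real ^ 'n \<Rightarrow> real ^ 'n ^ 'n \<Rightarrow> real ^ 'n \<Rightarrow> real ^ 'n::finite" where
  "Fmap \<theta> C x = (mat 1 - diagm \<theta>) *v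
      (matrix_inv (mat 1 - transpose (Wmat C x) ** diagm \<theta>) *v ones_over_n)"

definition equilibrium_A :: "real ^ 'n \<Rightarrow> real ^ 'n ^ 'n \<Rightarrow> real ^ 'n \<Rightarrow> bool" where
  "equilibrium_A \<theta> C x \<longleftrightarrow> x \<in> std_simplex \<and> Fmap \<theta> C x = x"

definition equilibrium_B :: "real ^ 'n \<Rightarrow> real ^ 'n ^ 'n \<Rightarrow> real ^ 'n ^ 'n \<Rightarrow> real ^ 'n::finite \<Rightarrow> bool" where
  "equilibrium_B \<theta> C V x \<longleftrightarrow> row_stochastic V \<and> x \<in> std_simplex \<and>
      V = diagm \<theta> ** Wmat C x ** V + (mat 1 - diagm \<theta>) \<and>
      x = transpose V *v ones_over_n"

end

(* In a star whose center l is open to influence (theta_l = 0), every leaf listens only to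
   the center, so the linear system behind F decouples: F(x)_i = (1 - theta_i) / (n (1 - theta_i x_i))
   at every leaf i, and the center receives the remaining mass.  A fixed point therefore solves
   n x_i (1 - theta_i x_i) = 1 - theta_i at each leaf, a quadratic with exactly one root in [0,1],
   and the center coordinate is then forced.  For system (B) the equation for V can be solved
   entrywise in terms of x, and the column averages of that solution reproduce F(x), so (A) and (B)
   have the same unique equilibrium. *)

theory Submission
  imports Defs
begin

section \<open>The leaf equation\<close>

text \<open>The root in [0,1] of N z (1 - t z) = 1 - t; for t = 0 the equation is linear and the
  root 1/N is the limit of the quadratic formula.\<close>
definition leaf_power :: "real \<Rightarrow> real \<Rightarrow> real" where
  "leaf_power N t = (if t = 0 then 1 / N else (N - sqrt (N\<^sup>2 - 4 * N * t * (1 - t))) / (2 * N * t))"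

lemma leaf_power_sqrt_bounds:
  assumes N: "N \<ge> 2" and t: "0 < t" "t < 1"
  shows "0 < N\<^sup>2 - 4 * N * t * (1 - t)"
    and "N - 2 * t < sqrt (N\<^sup>2 - 4 * N * t * (1 - t))"
    and "2 * N * t - N < sqrt (N\<^sup>2 - 4 * N * t * (1 - t))"
    and "sqrt (N\<^sup>2 - 4 * N * t * (1 - t)) < N"
proof -
  have "t * t < N * (t * t)" using N t by simp
  hence "(N - 2 * t)\<^sup>2 < N\<^sup>2 - 4 * N * t * (1 - t)" by (simp add: power2_eq_square algebra_simps)
  thus "0 < N\<^sup>2 - 4 * N * t * (1 - t)" using zero_le_power2[of "N - 2 * t"] by linarith
  from \<open>(N - 2 * t)\<^sup>2 < _\<close> show "N - 2 * t < sqrt (N\<^sup>2 - 4 * N * t * (1 - t))" by (simp add: real_less_rsqrt)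
  have "0 < 4 * N * t * (1 - t) * (N - 1)" using N t by simp
  hence "(2 * N * t - N)\<^sup>2 < N\<^sup>2 - 4 * N * t * (1 - t)" by (simp add: power2_eq_square algebra_simps)
  thus "2 * N * t - N < sqrt (N\<^sup>2 - 4 * N * t * (1 - t))" by (simp add: real_less_rsqrt)
  have "0 < 4 * N * t * (1 - t)" using N t by simp
  hence "sqrt (N\<^sup>2 - 4 * N * t * (1 - t)) < sqrt (N\<^sup>2)" by (intro real_sqrt_less_mono) simp
  thus "sqrt (N\<^sup>2 - 4 * N * t * (1 - t)) < N" using N by simp
qed

lemma leaf_power_equation:
  assumes N: "N \<ge> 2" and t: "0 \<le> t" "t < 1"
  shows "N * leaf_power N t * (1 - t * leaf_power N t) = 1 - t"
proof (cases "t = 0")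
  case True thus ?thesis using N by (simp add: leaf_power_def)
next
  case False
  hence tp: "0 < t" using t by simp
  define s where "s = sqrt (N\<^sup>2 - 4 * N * t * (1 - t))"
  have s2: "s\<^sup>2 = N\<^sup>2 - 4 * N * t * (1 - t)"
    using leaf_power_sqrt_bounds(1)[OF N tp t(2)] unfolding s_def by simp
  define u where "u = leaf_power N t"
  have u: "2 * N * t * u = N - s" using False N tp by (simp add: u_def leaf_power_def s_def)
  have "(4 * N * t) * (N * u * (1 - t * u)) = (2 * N * t * u) * (2 * N - 2 * N * t * u)"
    by (simp add: algebra_simps)
  also have "\<dots> = (N - s) * (N + s)" by (simp add: u)
  also have "\<dots> = N\<^sup>2 - s\<^sup>2" by (simp add: power2_eq_square algebra_simps)
  also have "\<dots> = (4 * N * t) * (1 - t)" by (simp add: s2)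
  finally show ?thesis using N tp unfolding u_def by simp
qed

lemma leaf_power_pos: "N \<ge> 2 \<Longrightarrow> 0 \<le> t \<Longrightarrow> t < 1 \<Longrightarrow> 0 < leaf_power N t"
  using leaf_power_sqrt_bounds[of N t] by (auto simp: leaf_power_def)

lemma leaf_power_less:
  assumes N: "N \<ge> 2" and t: "0 < t" "t < 1"
  shows "leaf_power N t < 1 / N"
proof -
  have "leaf_power N t * N * (2 * t) = N - sqrt (N\<^sup>2 - 4 * N * t * (1 - t))"
    using N t by (simp add: leaf_power_def)
  also have "\<dots> < 1 * (2 * t)" using leaf_power_sqrt_bounds[OF N t] by simp
  finally have "leaf_power N t * N < 1" using t by simp
  thus ?thesis using N by (simp add: field_simps)
qed

lemma leaf_power_le: "N \<ge> 2 \<Longrightarrow> 0 \<le> t \<Longrightarrow> t < 1 \<Longrightarrow> leaf_power N t \<le> 1 / N"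
  using leaf_power_less[of N t] by (cases "t = 0") (auto simp: leaf_power_def)

lemma leaf_power_unique:
  assumes N: "N \<ge> 2" and t: "0 \<le> t" "t < 1" and z: "0 \<le> z" "z \<le> 1"
    and eq: "N * z * (1 - t * z) = 1 - t"
  shows "z = leaf_power N t"
proof (cases "t = 0")
  case True thus ?thesis using eq N by (simp add: leaf_power_def field_simps)
next
  case False
  hence tp: "0 < t" using t by simp
  define s where "s = sqrt (N\<^sup>2 - 4 * N * t * (1 - t))"
  have "(2 * N * t * z - N)\<^sup>2 = N\<^sup>2 - 4 * N * t * (N * z * (1 - t * z))"
    by (simp add: power2_eq_square algebra_simps)
  hence s: "s = \<bar>2 * N * t * z - N\<bar>" using eq unfolding s_def by (metis real_sqrt_abs mult.assoc)
  have "2 * N * t * z \<le> 2 * N * t" using N tp z by simp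
  hence "2 * N * t * z - N < s" using leaf_power_sqrt_bounds(3)[OF N tp t(2)] unfolding s_def by linarith
  hence "s = N - 2 * N * t * z" using s by linarith
  thus ?thesis using False N tp by (simp add: leaf_power_def s_def[symmetric])
qed

lemma leaf_power_strict_antimono:
  assumes N: "N \<ge> 2" and st: "0 < s" "s < t" "t < 1"
  shows "leaf_power N t < leaf_power N s"
proof -
  define a where "a = leaf_power N s"
  define b where "b = leaf_power N t"
  have a: "0 < a" "N * a < 1" "s * (1 - N * a\<^sup>2) = 1 - N * a"
    using leaf_power_pos[of N s] leaf_power_less[of N s] leaf_power_equation[of N s] N st
    unfolding a_def by (auto simp: field_simps power2_eq_square)
  have b: "0 < b" "N * b < 1" "t * (1 - N * b\<^sup>2) = 1 - N * b"
    using leaf_power_pos[of N t] leaf_power_less[of N t] leaf_power_equation[of N t] N st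
    unfolding b_def by (auto simp: field_simps power2_eq_square)
  have small: "z < 1/2" "0 < 1 - N * z\<^sup>2" if "0 < z" "N * z < 1" for z
  proof -
    have "2 * z \<le> N * z" using that N by (intro mult_right_mono) auto
    thus "z < 1/2" using that by linarith
    have "N * z * z < 1 * 1" using that \<open>z < 1/2\<close> by (intro mult_strict_mono) auto
    thus "0 < 1 - N * z\<^sup>2" by (simp add: power2_eq_square)
  qed
  have "(1 - N * a\<^sup>2) * (1 - N * b\<^sup>2) * (s - t) = N * (b - a) * (1 - a - b + N * a * b)"
    using a(3) b(3) by algebra
  moreover have "(1 - N * a\<^sup>2) * (1 - N * b\<^sup>2) * (s - t) < 0"
    using small[OF a(1,2)] small[OF b(1,2)] st by (simp add: mult_pos_neg)
  moreover have "0 < N * a * b" using N a(1) b(1) by simp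
  hence "0 < 1 - a - b + N * a * b" using small(1)[OF a(1,2)] small(1)[OF b(1,2)] by linarith
  ultimately have "b - a < 0" using N by (simp add: zero_less_mult_iff mult_less_0_iff)
  thus ?thesis by (simp add: a_def b_def)
qed

lemma diagm_entry: "diagm v $ i $ j = (if i = j then v $ i else 0)"
  by (simp add: diagm_def)

lemma diagm_mult_entry: "(diagm v ** A) $ i $ k = v $ i * A $ i $ k"
proof -
  have "(diagm v ** A) $ i $ k = (\<Sum>j\<in>UNIV. if j = i then v $ i * A $ i $ k else 0)"
    unfolding matrix_matrix_mult_def vec_lambda_beta by (intro sum.cong refl) (auto simp: diagm_def)
  thus ?thesis by simp
qed

lemma id_minus_diagm_mult_vec: "((mat 1 - diagm v) *v y) $ k = (1 - v $ k) * y $ k"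
proof -
  have "((mat 1 - diagm v) *v y) $ k = (\<Sum>j\<in>UNIV. if j = k then (1 - v $ k) * y $ k else 0)"
    unfolding matrix_vector_mult_def vec_lambda_beta by (intro sum.cong refl) (auto simp: mat_def diagm_def)
  thus ?thesis by simp
qed

lemma Wmat_entry: "Wmat C x $ i $ k = (if i = k then x $ i else 0) + (1 - x $ i) * C $ i $ k"
proof -
  have "((mat 1 - diagm x) ** C) $ i $ k = (\<Sum>j\<in>UNIV. if i = j then (1 - x $ i) * C $ j $ k else 0)"
    unfolding matrix_matrix_mult_def vec_lambda_beta by (intro sum.cong) (auto simp: mat_def diagm_def)
  thus ?thesis by (simp add: Wmat_def diagm_def)
qed

lemma matrix_inv_mult_vec_eq:
  fixes A :: "real ^ 'n ^ 'n::finite"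
  assumes "invertible A" and "A *v y = b"
  shows "matrix_inv A *v b = y"
proof -
  have "matrix_inv A ** A = mat 1"
    using someI_ex[OF assms(1)[unfolded invertible_def]] unfolding matrix_inv_def by blast
  thus ?thesis using assms(2) by (metis matrix_vector_mul_assoc matrix_vector_mul_lid)
qed

lemma star_topology_row:
  assumes "row_stochastic C" and "star_topology C l" and "i \<noteq> l"
  shows "C $ i $ k = (if k = l then 1 else 0)"
proof -
  have off: "C $ i $ j = 0" if "j \<noteq> l" for j
    using assms that by (force simp: row_stochastic_def star_topology_def order.order_iff_strict)
  have "1 = (\<Sum>j\<in>UNIV. C $ i $ j)" using assms(1) by (simp add: row_stochastic_def)
  also have "\<dots> = C $ i $ l" using off by (simp add: sum.remove[of UNIV l])
  finally show ?thesis using off by auto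
qed

lemma std_simplex_coord_bounds: "x \<in> std_simplex \<Longrightarrow> 0 \<le> x $ k \<and> x $ k \<le> 1"
  unfolding std_simplex_def
  by (metis (mono_tags, lifting) UNIV_I finite mem_Collect_eq member_le_sum)

section \<open>Star networks with an open center\<close>

definition star_map :: "real ^ 'n \<Rightarrow> 'n \<Rightarrow> real ^ 'n \<Rightarrow> real ^ 'n::finite" where
  "star_map \<theta> l x = (\<chi> j. if j = l
      then 1 / real CARD('n) + (1 / real CARD('n)) * (\<Sum>i\<in>UNIV. \<theta> $ i * (1 - x $ i) / (1 - \<theta> $ i * x $ i))
      else (1 - \<theta> $ j) / (real CARD('n) * (1 - \<theta> $ j * x $ j)))"

definition star_influence :: "real ^ 'n \<Rightarrow> 'n \<Rightarrow> real ^ 'n \<Rightarrow> real ^ 'n ^ 'n::finite" where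
  "star_influence \<theta> l x = (\<chi> i j. (\<theta> $ i * (1 - x $ i) * (if j = l then 1 else 0)
      + (1 - \<theta> $ i) * (if j = i then 1 else 0)) / (1 - \<theta> $ i * x $ i))"

locale star_network =
  fixes C :: "real ^ 'n ^ 'n" and \<theta> :: "real ^ 'n::finite" and l :: 'n
  assumes C_row_stochastic: "row_stochastic C"
    and C_star: "star_topology C l"
    and \<theta>_range: "\<forall>i. 0 \<le> \<theta> $ i \<and> \<theta> $ i < 1"
    and \<theta>_center: "\<theta> $ l = 0"
begin

abbreviation system_matrix :: "real ^ 'n \<Rightarrow> real ^ 'n ^ 'n" where
  "system_matrix x \<equiv> mat 1 - transpose (Wmat C x) ** diagm \<theta>"

lemma system_matrix_mult_vec:
  "(system_matrix x *v y) $ k =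
     (1 - \<theta> $ k * x $ k) * y $ k - (if k = l then (\<Sum>i\<in>UNIV. (1 - x $ i) * \<theta> $ i * y $ i) else 0)"
proof -
  have WT: "(transpose (Wmat C x) ** diagm \<theta>) $ k $ j = Wmat C x $ j $ k * \<theta> $ j" for j
  proof -
    have "(transpose (Wmat C x) ** diagm \<theta>) $ k $ j
        = (\<Sum>m\<in>UNIV. if m = j then Wmat C x $ j $ k * \<theta> $ j else 0)"
      unfolding matrix_matrix_mult_def vec_lambda_beta
      by (intro sum.cong) (auto simp: transpose_def diagm_def)
    thus ?thesis by simp
  qed
  have W: "Wmat C x $ j $ k * \<theta> $ j * y $ j = (if j = k then x $ j * \<theta> $ j * y $ j else 0)
           + (if k = l then (1 - x $ j) * \<theta> $ j * y $ j else 0)" for j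
    using star_topology_row[OF C_row_stochastic C_star, of j k] \<theta>_center
    by (cases "j = l") (auto simp: Wmat_entry algebra_simps)
  have "(system_matrix x *v y) $ k
      = (\<Sum>j\<in>UNIV. (if k = j then y $ j else 0) - Wmat C x $ j $ k * \<theta> $ j * y $ j)"
    unfolding matrix_vector_mult_def vec_lambda_beta
    by (intro sum.cong refl) (simp add: WT mat_def algebra_simps)
  also have "\<dots> = y $ k - (\<Sum>j\<in>UNIV. Wmat C x $ j $ k * \<theta> $ j * y $ j)"
    by (simp add: sum_subtractf)
  also have "\<dots> = y $ k - x $ k * \<theta> $ k * y $ k
      - (if k = l then (\<Sum>i\<in>UNIV. (1 - x $ i) * \<theta> $ i * y $ i) else 0)"
    by (simp add: W sum.distrib)
  finally show ?thesis by (simp add: algebra_simps)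
qed

lemma invertible_system_matrix:
  assumes x: "\<forall>k. \<theta> $ k * x $ k < 1"
  shows "invertible (system_matrix x)"
proof -
  have "y = 0" if My: "system_matrix x *v y = 0" for y
  proof -
    have off: "y $ k = 0" if "k \<noteq> l" for k
      using system_matrix_mult_vec[of x y k] My that x[rule_format, of k] by auto
    hence "(\<Sum>i\<in>UNIV. (1 - x $ i) * \<theta> $ i * y $ i) = 0"
      using \<theta>_center by (intro sum.neutral) (metis mult_zero_right mult_zero_left)
    hence "y $ l = 0" using system_matrix_mult_vec[of x y l] My \<theta>_center by simp
    with off show "y = 0" by (metis vec_eq_iff zero_index)
  qed
  thus ?thesis using invertible_left_inverse matrix_left_invertible_ker by blast
qed

text \<open>Every leaf row of the system involves only its own unknown; the center row then
  determines the center unknown.\<close>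
lemma Fmap_eq_star_map:
  assumes x: "\<forall>k. \<theta> $ k * x $ k < 1"
  shows "Fmap \<theta> C x = star_map \<theta> l x"
proof -
  define y where "y = (\<chi> k. if k = l
      then 1 / real CARD('n) + (\<Sum>i\<in>UNIV. (1 - x $ i) * \<theta> $ i / (real CARD('n) * (1 - \<theta> $ i * x $ i)))
      else 1 / (real CARD('n) * (1 - \<theta> $ k * x $ k)))"
  have "(\<Sum>i\<in>UNIV. (1 - x $ i) * \<theta> $ i * y $ i)
      = (\<Sum>i\<in>UNIV. (1 - x $ i) * \<theta> $ i / (real CARD('n) * (1 - \<theta> $ i * x $ i)))"
    by (intro sum.cong refl) (auto simp: y_def \<theta>_center)
  moreover have "1 - \<theta> $ k * x $ k \<noteq> 0" for k using x[rule_format, of k] by simp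
  ultimately have "system_matrix x *v y = ones_over_n"
    by (auto simp: vec_eq_iff system_matrix_mult_vec y_def ones_over_n_def \<theta>_center)
  hence y: "matrix_inv (system_matrix x) *v ones_over_n = y"
    by (rule matrix_inv_mult_vec_eq[OF invertible_system_matrix[OF x]])
  have "(\<Sum>i\<in>UNIV. (1 - x $ i) * \<theta> $ i / (real CARD('n) * (1 - \<theta> $ i * x $ i)))
      = (1 / real CARD('n)) * (\<Sum>i\<in>UNIV. \<theta> $ i * (1 - x $ i) / (1 - \<theta> $ i * x $ i))"
    unfolding sum_distrib_left by (intro sum.cong refl) (simp add: field_simps)
  thus ?thesis
    by (auto simp: vec_eq_iff Fmap_def y id_minus_diagm_mult_vec y_def star_map_def \<theta>_center)
qed

lemma sum_star_map:
  assumes x: "\<forall>k. \<theta> $ k * x $ k < 1"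
  shows "(\<Sum>k\<in>UNIV. star_map \<theta> l x $ k) = 1"
proof -
  define a where "a k = (1 - \<theta> $ k) / (real CARD('n) * (1 - \<theta> $ k * x $ k))" for k
  define b where "b k = (1 / real CARD('n)) * (\<theta> $ k * (1 - x $ k) / (1 - \<theta> $ k * x $ k))" for k
  have split: "star_map \<theta> l x $ k = a k + (if k = l then (\<Sum>i\<in>UNIV. b i) else 0)" for k
    using \<theta>_center by (auto simp: star_map_def a_def b_def sum_distrib_left)
  have ab: "a k + b k = 1 / real CARD('n)" for k
  proof -
    have "1 - \<theta> $ k * x $ k \<noteq> 0" using x[rule_format, of k] by simp
    thus ?thesis by (simp add: a_def b_def field_simps)
  qed
  have "(\<Sum>k\<in>UNIV. star_map \<theta> l x $ k) = (\<Sum>k\<in>UNIV. a k + b k)"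
    by (simp add: split sum.distrib)
  thus ?thesis by (simp add: ab)
qed

lemma \<theta>_mult_less_one:
  assumes "x $ k \<le> 1"
  shows "\<theta> $ k * x $ k < 1"
proof -
  have "\<theta> $ k * x $ k \<le> \<theta> $ k * 1" using \<theta>_range assms by (intro mult_left_mono) auto
  thus ?thesis using \<theta>_range by (metis mult_1_right order.strict_trans1)
qed

lemma diagm_Wmat_mult_entry:
  "(diagm \<theta> ** Wmat C x ** V) $ i $ j = \<theta> $ i * (x $ i * V $ i $ j + (1 - x $ i) * V $ l $ j)"
proof (cases "i = l")
  case True thus ?thesis
    using \<theta>_center by (simp add: matrix_mul_assoc[symmetric] diagm_mult_entry)
next
  case False
  have "(Wmat C x ** V) $ i $ j
      = (\<Sum>k\<in>UNIV. (if k = i then x $ i * V $ i $ j else 0) + (if k = l then (1 - x $ i) * V $ l $ j else 0))"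
    unfolding matrix_matrix_mult_def vec_lambda_beta using False
    by (intro sum.cong refl) (auto simp: Wmat_entry star_topology_row[OF C_row_stochastic C_star] algebra_simps)
  thus ?thesis by (simp add: matrix_mul_assoc[symmetric] diagm_mult_entry sum.distrib)
qed

lemma influence_fixed_point_iff:
  assumes x: "\<forall>k. \<theta> $ k * x $ k < 1"
  shows "V = diagm \<theta> ** Wmat C x ** V + (mat 1 - diagm \<theta>) \<longleftrightarrow> V = star_influence \<theta> l x"
proof -
  have d: "1 - \<theta> $ i * x $ i \<noteq> 0" for i using x[rule_format, of i] by simp
  have "V = diagm \<theta> ** Wmat C x ** V + (mat 1 - diagm \<theta>) \<longleftrightarrow>
     (\<forall>i j. V $ i $ j = \<theta> $ i * (x $ i * V $ i $ j + (1 - x $ i) * V $ l $ j)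
                      + (if i = j then 1 - \<theta> $ i else 0))"
    by (simp add: vec_eq_iff diagm_Wmat_mult_entry mat_def diagm_entry)
  also have "\<dots> \<longleftrightarrow> (\<forall>i j. V $ i $ j * (1 - \<theta> $ i * x $ i)
      = \<theta> $ i * (1 - x $ i) * (if j = l then 1 else 0) + (1 - \<theta> $ i) * (if j = i then 1 else 0))"
    (is "(\<forall>i j. ?E i j) \<longleftrightarrow> (\<forall>i j. ?F i j)")
  proof
    assume E: "\<forall>i j. ?E i j"
    hence "V $ l $ j = (if j = l then 1 else 0)" for j using E[rule_format, of l j] \<theta>_center by auto
    thus "\<forall>i j. ?F i j" using E by (simp add: algebra_simps)
  next
    assume F: "\<forall>i j. ?F i j"
    hence "V $ l $ j = (if j = l then 1 else 0)" for j using F[rule_format, of l j] \<theta>_center by auto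
    show "\<forall>i j. ?E i j"
    proof (intro allI)
      fix i j
      show "?E i j" using F[rule_format, of i j] \<open>V $ l $ j = _\<close> by (auto simp: algebra_simps)
    qed
  qed
  also have "\<dots> \<longleftrightarrow> V = star_influence \<theta> l x"
    using d by (auto simp: vec_eq_iff star_influence_def eq_divide_eq)
  finally show ?thesis .
qed

lemma transpose_star_influence_mult:
  "transpose (star_influence \<theta> l x) *v ones_over_n = star_map \<theta> l x"
proof -
  have col: "(\<Sum>i\<in>UNIV. star_influence \<theta> l x $ i $ j)
      = (if j = l then 1 + (\<Sum>i\<in>UNIV. \<theta> $ i * (1 - x $ i) / (1 - \<theta> $ i * x $ i))
         else (1 - \<theta> $ j) / (1 - \<theta> $ j * x $ j))" for j
  proof (cases "j = l")
    case True
    have "(\<Sum>i\<in>UNIV. star_influence \<theta> l x $ i $ j)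
        = (\<Sum>i\<in>UNIV. \<theta> $ i * (1 - x $ i) / (1 - \<theta> $ i * x $ i) + (if i = l then 1 else 0))"
      using True \<theta>_center by (intro sum.cong refl) (auto simp: star_influence_def add_divide_distrib)
    thus ?thesis using True by (simp add: sum.distrib)
  next
    case False
    have "(\<Sum>i\<in>UNIV. star_influence \<theta> l x $ i $ j)
        = (\<Sum>i\<in>UNIV. if i = j then (1 - \<theta> $ j) / (1 - \<theta> $ j * x $ j) else 0)"
      using False by (intro sum.cong refl) (auto simp: star_influence_def)
    thus ?thesis using False by simp
  qed
  have "(transpose V *v ones_over_n) $ j = (\<Sum>i\<in>UNIV. V $ i $ j) / real CARD('n)"
    for V :: "real ^ 'n ^ 'n" and j
    by (simp add: matrix_vector_mult_def transpose_def ones_over_n_def sum_divide_distrib)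
  thus ?thesis by (simp add: vec_eq_iff col star_map_def add_divide_distrib)
qed

lemma row_stochastic_star_influence:
  assumes x: "\<forall>k. 0 \<le> x $ k \<and> x $ k \<le> 1"
  shows "row_stochastic (star_influence \<theta> l x)"
proof -
  have d: "0 < 1 - \<theta> $ i * x $ i" for i using \<theta>_mult_less_one x by simp
  have "0 \<le> star_influence \<theta> l x $ i $ j" for i j
    using d[of i] x \<theta>_range less_imp_le[of "\<theta> $ i" 1]
    by (auto simp: star_influence_def intro!: divide_nonneg_pos add_nonneg_nonneg mult_nonneg_nonneg)
  moreover have "(\<Sum>j\<in>UNIV. star_influence \<theta> l x $ i $ j) = 1" for i
  proof -
    have "(\<Sum>j\<in>UNIV. star_influence \<theta> l x $ i $ j)
        = (\<theta> $ i * (1 - x $ i) + (1 - \<theta> $ i)) / (1 - \<theta> $ i * x $ i)"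
      by (simp add: star_influence_def sum_divide_distrib[symmetric] sum.distrib
          sum_distrib_left[symmetric])
    also have "\<dots> = 1" using d[of i] by (simp add: field_simps)
    finally show ?thesis .
  qed
  ultimately show ?thesis by (simp add: row_stochastic_def)
qed

lemma std_simplex_\<theta>_mult_less_one: "x \<in> std_simplex \<Longrightarrow> \<forall>k. \<theta> $ k * x $ k < 1"
  by (simp add: \<theta>_mult_less_one std_simplex_coord_bounds)

lemma equilibrium_A_iff: "equilibrium_A \<theta> C x \<longleftrightarrow> x \<in> std_simplex \<and> star_map \<theta> l x = x"
  using Fmap_eq_star_map[OF std_simplex_\<theta>_mult_less_one] unfolding equilibrium_A_def by auto

lemma equilibrium_B_iff: "(\<exists>V. equilibrium_B \<theta> C V x) \<longleftrightarrow> x \<in> std_simplex \<and> star_map \<theta> l x = x"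
proof
  assume "\<exists>V. equilibrium_B \<theta> C V x"
  then obtain V where x: "x \<in> std_simplex" and V: "V = diagm \<theta> ** Wmat C x ** V + (mat 1 - diagm \<theta>)"
    and xV: "x = transpose V *v ones_over_n" by (auto simp: equilibrium_B_def)
  have x1: "\<forall>k. \<theta> $ k * x $ k < 1" using x by (rule std_simplex_\<theta>_mult_less_one)
  have "V = star_influence \<theta> l x" using V influence_fixed_point_iff[OF x1] by blast
  hence "star_map \<theta> l x = x"
    using xV transpose_star_influence_mult[of x] by (simp only:)
  with x show "x \<in> std_simplex \<and> star_map \<theta> l x = x" ..
next
  assume x: "x \<in> std_simplex \<and> star_map \<theta> l x = x"
  have x1: "\<forall>k. \<theta> $ k * x $ k < 1" using x std_simplex_\<theta>_mult_less_one by blast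
  have "equilibrium_B \<theta> C (star_influence \<theta> l x) x"
    unfolding equilibrium_B_def transpose_star_influence_mult
  proof (intro conjI)
    show "row_stochastic (star_influence \<theta> l x)"
      using x std_simplex_coord_bounds by (intro row_stochastic_star_influence) blast
    show "star_influence \<theta> l x = diagm \<theta> ** Wmat C x ** star_influence \<theta> l x + (mat 1 - diagm \<theta>)"
      using influence_fixed_point_iff[OF x1] by blast
  qed (use x in auto)
  thus "\<exists>V. equilibrium_B \<theta> C V x" ..
qed

end

text \<open>The value of star_map at the center does not depend on the center coordinate of its
  argument, so feeding it the leaf powers already yields the fixed point.\<close>
definition star_equilibrium :: "real ^ 'n \<Rightarrow> 'n \<Rightarrow> real ^ 'n::finite" where
  "star_equilibrium \<theta> l = star_map \<theta> l (\<chi> k. leaf_power (real CARD('n)) (\<theta> $ k))"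

context star_network
begin

lemma star_map_cong:
  assumes "\<forall>k. k \<noteq> l \<longrightarrow> x $ k = y $ k"
  shows "star_map \<theta> l x = star_map \<theta> l y"
proof -
  have "\<theta> $ i * (1 - x $ i) / (1 - \<theta> $ i * x $ i) = \<theta> $ i * (1 - y $ i) / (1 - \<theta> $ i * y $ i)" for i
    using assms \<theta>_center by (cases "i = l") auto
  thus ?thesis using assms by (simp add: vec_eq_iff star_map_def)
qed

lemma star_map_leaf_fixed_iff:
  assumes "k \<noteq> l" and "\<theta> $ k * x $ k < 1"
  shows "star_map \<theta> l x $ k = x $ k \<longleftrightarrow>
    real CARD('n) * x $ k * (1 - \<theta> $ k * x $ k) = 1 - \<theta> $ k"
  using assms by (auto simp: star_map_def divide_eq_eq algebra_simps)

context
  assumes two_nodes: "CARD('n) \<ge> 2"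
begin

lemma leaf_power_range: "0 < leaf_power (real CARD('n)) (\<theta> $ k) \<and> leaf_power (real CARD('n)) (\<theta> $ k) \<le> 1 / 2"
proof -
  have N: "2 \<le> real CARD('n)" using two_nodes by simp
  hence "1 / real CARD('n) \<le> 1 / 2" by (simp add: field_simps)
  thus ?thesis using leaf_power_pos[OF N] leaf_power_le[OF N] \<theta>_range by (meson order.trans)
qed

lemma star_equilibrium_leaf:
  assumes "k \<noteq> l"
  shows "star_equilibrium \<theta> l $ k = leaf_power (real CARD('n)) (\<theta> $ k)"
proof -
  define \<rho> :: "real ^ 'n" where "\<rho> = (\<chi> k. leaf_power (real CARD('n)) (\<theta> $ k))"
  have "\<rho> $ k \<le> 1" using leaf_power_range[of k] by (simp add: \<rho>_def)
  hence "\<theta> $ k * \<rho> $ k < 1" by (rule \<theta>_mult_less_one)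
  moreover have "real CARD('n) * \<rho> $ k * (1 - \<theta> $ k * \<rho> $ k) = 1 - \<theta> $ k"
    using two_nodes \<theta>_range by (simp add: \<rho>_def leaf_power_equation)
  ultimately have "star_map \<theta> l \<rho> $ k = \<rho> $ k" using star_map_leaf_fixed_iff[OF assms] by blast
  thus ?thesis by (simp add: star_equilibrium_def \<rho>_def)
qed

lemma star_map_star_equilibrium: "star_map \<theta> l (star_equilibrium \<theta> l) = star_equilibrium \<theta> l"
  unfolding star_equilibrium_def[of \<theta> l]
  by (intro star_map_cong) (simp add: star_equilibrium_leaf star_equilibrium_def[symmetric])

lemma star_map_fixed_point_iff:
  assumes x: "x \<in> std_simplex"
  shows "star_map \<theta> l x = x \<longleftrightarrow> x = star_equilibrium \<theta> l"
proof
  assume fixed: "star_map \<theta> l x = x"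
  have "x $ k = star_equilibrium \<theta> l $ k" if k: "k \<noteq> l" for k
  proof -
    have "real CARD('n) * x $ k * (1 - \<theta> $ k * x $ k) = 1 - \<theta> $ k"
      using star_map_leaf_fixed_iff[OF k, of x] fixed std_simplex_\<theta>_mult_less_one[OF x] by simp
    hence "x $ k = leaf_power (real CARD('n)) (\<theta> $ k)"
      using leaf_power_unique two_nodes \<theta>_range std_simplex_coord_bounds[OF x] by simp
    thus ?thesis using star_equilibrium_leaf[OF k] by simp
  qed
  hence "star_map \<theta> l x = star_map \<theta> l (star_equilibrium \<theta> l)" by (intro star_map_cong) blast
  thus "x = star_equilibrium \<theta> l" using fixed star_map_star_equilibrium by simp
qed (use star_map_star_equilibrium in simp)

lemma star_equilibrium_term_nonneg:
  "0 \<le> \<theta> $ i * (1 - star_equilibrium \<theta> l $ i) / (1 - \<theta> $ i * star_equilibrium \<theta> l $ i)"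
proof (cases "i = l")
  case False
  hence "star_equilibrium \<theta> l $ i \<le> 1" using leaf_power_range[of i] by (simp add: star_equilibrium_leaf)
  thus ?thesis using \<theta>_range \<theta>_mult_less_one by (simp add: divide_nonneg_pos)
qed (simp add: \<theta>_center)

lemma star_equilibrium_center:
  "star_equilibrium \<theta> l $ l = 1 / real CARD('n) + (1 / real CARD('n)) *
     (\<Sum>j\<in>{j. 0 < \<theta> $ j}. \<theta> $ j * (1 - star_equilibrium \<theta> l $ j)
                              / (1 - \<theta> $ j * star_equilibrium \<theta> l $ j))"
proof -
  have "(\<Sum>j\<in>{j. 0 < \<theta> $ j}. \<theta> $ j * (1 - star_equilibrium \<theta> l $ j) / (1 - \<theta> $ j * star_equilibrium \<theta> l $ j))
      = (\<Sum>j\<in>UNIV. \<theta> $ j * (1 - star_equilibrium \<theta> l $ j) / (1 - \<theta> $ j * star_equilibrium \<theta> l $ j))"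
    using \<theta>_range by (intro sum.mono_neutral_left) (auto simp: order.order_iff_strict)
  thus ?thesis by (subst (1) star_map_star_equilibrium[symmetric]) (simp add: star_map_def)
qed

lemma star_equilibrium_leaf_le: "k \<noteq> l \<Longrightarrow> star_equilibrium \<theta> l $ k \<le> 1 / 2"
  using leaf_power_range by (simp add: star_equilibrium_leaf)

lemma star_equilibrium_in_int_std_simplex: "star_equilibrium \<theta> l \<in> int_std_simplex"
proof -
  have "\<theta> $ k * star_equilibrium \<theta> l $ k < 1" for k
    using star_equilibrium_leaf_le[of k] \<theta>_mult_less_one[of _ k] \<theta>_center by (cases "k = l") auto
  hence "(\<Sum>k\<in>UNIV. star_equilibrium \<theta> l $ k) = 1"
    using sum_star_map[of "star_equilibrium \<theta> l"] star_map_star_equilibrium by simp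
  moreover have "0 < star_equilibrium \<theta> l $ k" for k
  proof (cases "k = l")
    case True
    have "0 \<le> (\<Sum>j\<in>{j. 0 < \<theta> $ j}. \<theta> $ j * (1 - star_equilibrium \<theta> l $ j)
                                        / (1 - \<theta> $ j * star_equilibrium \<theta> l $ j))"
      by (intro sum_nonneg star_equilibrium_term_nonneg)
    thus ?thesis unfolding True by (subst star_equilibrium_center) (simp add: add_pos_nonneg)
  qed (use leaf_power_range in \<open>simp add: star_equilibrium_leaf\<close>)
  ultimately show ?thesis by (simp add: int_std_simplex_def)
qed

lemma star_equilibrium_center_gt:
  assumes "\<exists>j. 0 < \<theta> $ j"
  shows "star_equilibrium \<theta> l $ l > 1 / real CARD('n)"
proof -
  have "0 < \<theta> $ j * (1 - star_equilibrium \<theta> l $ j) / (1 - \<theta> $ j * star_equilibrium \<theta> l $ j)"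
    if "0 < \<theta> $ j" for j
  proof -
    have "j \<noteq> l" using that \<theta>_center by auto
    hence "star_equilibrium \<theta> l $ j < 1" using star_equilibrium_leaf_le by fastforce
    thus ?thesis using that \<theta>_mult_less_one by (simp add: divide_pos_pos)
  qed
  hence "0 < (\<Sum>j\<in>{j. 0 < \<theta> $ j}. \<theta> $ j * (1 - star_equilibrium \<theta> l $ j)
                                   / (1 - \<theta> $ j * star_equilibrium \<theta> l $ j))"
    using assms by (intro sum_pos) auto
  thus ?thesis by (subst star_equilibrium_center) simp
qed

end

end

theorem theorem2:
  fixes C :: "real ^ 'n ^ 'n" and \<theta> :: "real ^ 'n::finite" and l :: 'n
  assumes n2: "CARD('n) \<ge> 2"
    and C_rs: "row_stochastic C"
    and C_diag: "\<forall>i. C $ i $ i = 0"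
    and th_range: "\<forall>i. 0 \<le> \<theta> $ i \<and> \<theta> $ i < 1"
    and th_pos: "\<exists>j. 0 < \<theta> $ j"
    and star: "star_topology C l"
    and th_l: "\<theta> $ l = 0"
  shows "\<exists>xs. (\<forall>x. equilibrium_A \<theta> C x \<longleftrightarrow> x = xs)
          \<and> (\<forall>x. (\<exists>V. equilibrium_B \<theta> C V x) \<longleftrightarrow> x = xs)
          \<and> xs \<in> int_std_simplex
          \<and> (\<forall>i. \<theta> $ i = 0 \<and> i \<noteq> l \<longrightarrow> xs $ i = 1 / real CARD('n))
          \<and> (\<forall>i. 0 < \<theta> $ i \<longrightarrow>
                xs $ i = (real CARD('n) - sqrt ((real CARD('n))\<^sup>2
                            - 4 * real CARD('n) * \<theta> $ i * (1 - \<theta> $ i)))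
                          / (2 * real CARD('n) * \<theta> $ i)
              \<and> xs $ i < 1 / real CARD('n))
          \<and> (\<forall>s t::real. 0 < s \<and> s < t \<and> t < 1 \<longrightarrow>
                (real CARD('n) - sqrt ((real CARD('n))\<^sup>2 - 4 * real CARD('n) * t * (1 - t)))
                  / (2 * real CARD('n) * t)
              < (real CARD('n) - sqrt ((real CARD('n))\<^sup>2 - 4 * real CARD('n) * s * (1 - s)))
                  / (2 * real CARD('n) * s))
          \<and> xs $ l = 1 / real CARD('n) + (1 / real CARD('n)) *
                (\<Sum>j\<in>{j. 0 < \<theta> $ j}. \<theta> $ j * (1 - xs $ j) / (1 - \<theta> $ j * xs $ j))
          \<and> xs $ l > 1 / real CARD('n)"
proof -
  interpret star_network C \<theta> l using C_rs star th_range th_l by unfold_locales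
  let ?xs = "star_equilibrium \<theta> l"
  have N: "real CARD('n) \<ge> 2" using n2 by simp
  have xs_simplex: "?xs \<in> std_simplex"
    using star_equilibrium_in_int_std_simplex[OF n2]
    by (auto simp: int_std_simplex_def std_simplex_def less_imp_le)
  have "equilibrium_A \<theta> C x \<longleftrightarrow> x = ?xs" for x
    using equilibrium_A_iff star_map_fixed_point_iff[OF n2] xs_simplex by blast
  moreover have "(\<exists>V. equilibrium_B \<theta> C V x) \<longleftrightarrow> x = ?xs" for x
    using equilibrium_B_iff star_map_fixed_point_iff[OF n2] xs_simplex by blast
  moreover have "?xs $ i = 1 / real CARD('n)" if "\<theta> $ i = 0" "i \<noteq> l" for i
    using that star_equilibrium_leaf[OF n2] by (simp add: leaf_power_def)
  moreover have "?xs $ i = (real CARD('n) - sqrt ((real CARD('n))\<^sup>2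
                    - 4 * real CARD('n) * \<theta> $ i * (1 - \<theta> $ i))) / (2 * real CARD('n) * \<theta> $ i)
              \<and> ?xs $ i < 1 / real CARD('n)" if "0 < \<theta> $ i" for i
  proof -
    have "i \<noteq> l" using that th_l by auto
    thus ?thesis using that star_equilibrium_leaf[OF n2] leaf_power_less[OF N] th_range
      by (simp add: leaf_power_def)
  qed
  moreover have "(real CARD('n) - sqrt ((real CARD('n))\<^sup>2 - 4 * real CARD('n) * t * (1 - t)))
                  / (2 * real CARD('n) * t)
              < (real CARD('n) - sqrt ((real CARD('n))\<^sup>2 - 4 * real CARD('n) * s * (1 - s)))
                  / (2 * real CARD('n) * s)" if "0 < s" "s < t" "t < 1" for s t :: real
    using leaf_power_strict_antimono[OF N that] that by (simp add: leaf_power_def)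
  ultimately show ?thesis
    using star_equilibrium_in_int_std_simplex[OF n2] star_equilibrium_center[OF n2]
      star_equilibrium_center_gt[OF n2 th_pos]
    by (intro exI[of _ ?xs]) blast
qed

end
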